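(* Let $k$ be a field of characteristic zero and $D_2 = k_{+}\{x\}/[x^2]$. Every element of the algebra $D_2[\partial]$ of differential operators over $D_2$ is nilpotent.
   Context: $k\{x\}$ denotes the differential polynomial algebra in one indeterminate: the polynomial algebra $k[x_0,x_1,x_2,\dots]$ (with $x = x_0$) with the $k$-linear derivation satisfying $x_n' = x_{n+1}$. $k_{+}\{x\}$ is its subalgebra (without unity) of differential polynomials with zero constant term; $[x^2]$ is the differential ideal (ideal closed under the derivation) of $k_{+}\{x\}$ generated by $x^2$, and $D_2$ carries the induced derivation $a\mapsto a'$. For a differential algebra $A$, the algebra $A[\partial]$ consists of finite sums $a_n\partial^n+\cdots+a_1\partial+a_0$ with $a_i\in A$, with multiplication determined by associativity and the rule $\partial a = a\partial + a'$ (so $(a\partial^i)(b\partial^j) = \sum_{l=0}^{i}\binom{i}{l} a\, b^{(l)}\partial^{i+j-l}$). *)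

theory Defs
  imports "HOL-Library.Poly_Mapping"
begin

text \<open>The differential polynomial algebra k{x} = k[x_0,x_1,...]: polynomials in countably
many variables, a monomial being a finitely supported exponent vector nat =>0 nat.\<close>
type_synonym 'k dpoly = "(nat \<Rightarrow>\<^sub>0 nat) \<Rightarrow>\<^sub>0 'k"

definition dvar :: "nat \<Rightarrow> 'k::comm_ring_1 dpoly" where
  "dvar n = Poly_Mapping.single (Poly_Mapping.single n 1) 1"

definition dconst :: "'k::comm_ring_1 \<Rightarrow> 'k dpoly" where
  "dconst c = Poly_Mapping.single 0 c"

text \<open>The k-linear derivation with x_n' = x_(n+1) (Leibniz rule applied to each monomial).\<close>
definition dderiv :: "'k::comm_ring_1 dpoly \<Rightarrow> 'k dpoly" where
  "dderiv p = (\<Sum>m::nat \<Rightarrow>\<^sub>0 nat\<in>Poly_Mapping.keys p. \<Sum>i::nat\<in>Poly_Mapping.keys m.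
      Poly_Mapping.single (m - Poly_Mapping.single i (1::nat) + Poly_Mapping.single (Suc i) 1)
        (Poly_Mapping.lookup p m * of_nat (Poly_Mapping.lookup m i)))"

definition kplus :: "'k::comm_ring_1 dpoly set" where
  "kplus = {p. Poly_Mapping.lookup p 0 = 0}"

inductive_set dideal_x2 :: "'k::comm_ring_1 dpoly set" where
  gen: "dvar 0 * dvar 0 \<in> dideal_x2"
| add: "p \<in> dideal_x2 \<Longrightarrow> q \<in> dideal_x2 \<Longrightarrow> p + q \<in> dideal_x2"
| smult: "p \<in> dideal_x2 \<Longrightarrow> dconst c * p \<in> dideal_x2"
| mult: "p \<in> dideal_x2 \<Longrightarrow> r \<in> kplus \<Longrightarrow> r * p \<in> dideal_x2"
| deriv: "p \<in> dideal_x2 \<Longrightarrow> dderiv p \<in> dideal_x2"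

text \<open>Differential operators over D_2 = k_+{x}/[x^2], represented by coefficient
representatives: P i \<in> k_+{x} is a representative of the coefficient of \<partial>^i,
P of finite support.  Two representatives give the same element of D_2[\<partial>] iff all
coefficient differences lie in [x^2].\<close>
definition is_D2_op :: "(nat \<Rightarrow> 'k::comm_ring_1 dpoly) \<Rightarrow> bool" where
  "is_D2_op P \<longleftrightarrow> finite {i. P i \<noteq> 0} \<and> (\<forall>i. P i \<in> kplus)"

text \<open>Product (a \<partial>^i)(b \<partial>^j) = \<Sum>_{l\<le>i} (i choose l) a b^(l) \<partial>^(i+j-l),
computed on representatives (well defined modulo [x^2] since [x^2] is a differential ideal).\<close>
definition op_mult :: "(nat \<Rightarrow> 'k::comm_ring_1 dpoly) \<Rightarrow> (nat \<Rightarrow> 'k dpoly) \<Rightarrow> (nat \<Rightarrow> 'k dpoly)" where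
  "op_mult P Q = (\<lambda>m. \<Sum>i\<in>{i. P i \<noteq> 0}. \<Sum>j\<in>{j. Q j \<noteq> 0}. \<Sum>l\<le>i.
      if i + j - l = m then of_nat (i choose l) * P i * (dderiv ^^ l) (Q j) else 0)"

text \<open>op_pow P n = P^(n+1).\<close>
primrec op_pow :: "(nat \<Rightarrow> 'k::comm_ring_1 dpoly) \<Rightarrow> nat \<Rightarrow> (nat \<Rightarrow> 'k dpoly)" where
  "op_pow P 0 = P"
| "op_pow P (Suc n) = op_mult P (op_pow P n)"

text \<open>An element of D_2[\<partial>] is nilpotent iff some positive power is zero in D_2[\<partial>],
i.e. all coefficients of the power lie in [x^2].\<close>
definition D2_op_nilpotent :: "(nat \<Rightarrow> 'k::comm_ring_1 dpoly) \<Rightarrow> bool" where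
  "D2_op_nilpotent P \<longleftrightarrow> (\<exists>n. \<forall>i. op_pow P n i \<in> dideal_x2)"

end

theory Submission
  imports Defs
begin

text \<open>Differentiating x_i^p x_(i+1)^q and multiplying by x_(i+1) gives
  p x_i^(p-1) x_(i+1)^(q+2) + q x_(i+2) x_i^p x_(i+1)^q, so in characteristic zero the ideal
  [x^2] lets one trade a factor x_i for two factors x_(i+1); starting from x_0^2 it thus
  contains x_i^(2^(i+1)), hence every polynomial each of whose monomials has some exponent of
  x_i at least 2^(i+1).
  Grade monomials by total degree and by weight (the sum of the indices). As the coefficients
  have no constant term, each further factor of a power of an operator raises the degree of every
  monomial by at least one, while it raises the weight by at most a constant C (the weights of
  the coefficients plus the derivatives created by moving the derivation to the right). So every
  monomial of P^n has degree at least n and weight at most C times its degree. Variables of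
  index above 2C then carry at most half of the degree, so for large n some x_i with i \<le> 2C
  occurs with exponent at least 2^(i+1).\<close>

abbreviation unit_exp :: "nat \<Rightarrow> nat \<Rightarrow>\<^sub>0 nat" where
  "unit_exp j \<equiv> Poly_Mapping.single j 1"

lemma poly_mapping_monomial_expansion:
  "p = (\<Sum>m\<in>Poly_Mapping.keys p. Poly_Mapping.single m (Poly_Mapping.lookup p m))"
  by (rule poly_mapping_eqI) (simp add: lookup_sum lookup_single when_def in_keys_iff)

lemma dconst_mult_single: "dconst c * Poly_Mapping.single m d = Poly_Mapping.single m (c * d)"
  by (simp add: dconst_def mult_single)

lemma single_in_kplus: "m \<noteq> 0 \<Longrightarrow> Poly_Mapping.single m c \<in> kplus"
  by (simp add: kplus_def lookup_single when_def)

lemma dvar_in_kplus: "dvar j \<in> kplus"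
  unfolding dvar_def by (rule single_in_kplus) (metis lookup_single_eq lookup_zero one_neq_zero)

lemma dderiv_single:
  "dderiv (Poly_Mapping.single m (c::'k::comm_ring_1)) =
    (\<Sum>i\<in>Poly_Mapping.keys m.
       Poly_Mapping.single (m - unit_exp i + unit_exp (Suc i)) (c * of_nat (Poly_Mapping.lookup m i)))"
  by (cases "c = 0") (simp_all add: dderiv_def)

lemma dideal_x2_zero: "(0::'k::comm_ring_1 dpoly) \<in> dideal_x2"
  using dideal_x2.smult[OF dideal_x2.gen, of 0] by (simp add: dconst_def)

lemma dideal_x2_uminus: "(p::'k::comm_ring_1 dpoly) \<in> dideal_x2 \<Longrightarrow> - p \<in> dideal_x2"
  using dideal_x2.smult[of p "-1"] by (simp add: dconst_def single_uminus)

lemma dideal_x2_diff: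
  "(p::'k::comm_ring_1 dpoly) \<in> dideal_x2 \<Longrightarrow> q \<in> dideal_x2 \<Longrightarrow> p - q \<in> dideal_x2"
  using dideal_x2.add[OF _ dideal_x2_uminus, of p q] by simp

lemma dideal_x2_sum:
  "(\<And>x. x \<in> S \<Longrightarrow> f x \<in> dideal_x2) \<Longrightarrow> sum f S \<in> (dideal_x2::'k::comm_ring_1 dpoly set)"
  by (induction S rule: infinite_finite_induct) (auto intro: dideal_x2_zero dideal_x2.add)

lemma dideal_x2_if_monomials:
  fixes p :: "'k::comm_ring_1 dpoly"
  assumes "\<And>m. m \<in> Poly_Mapping.keys p \<Longrightarrow> (Poly_Mapping.single m 1 :: 'k dpoly) \<in> dideal_x2"
  shows "p \<in> dideal_x2"
proof -
  have "(\<Sum>m\<in>Poly_Mapping.keys p. Poly_Mapping.single m (Poly_Mapping.lookup p m)) \<in> dideal_x2"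
  proof (rule dideal_x2_sum)
    fix m assume "m \<in> Poly_Mapping.keys p"
    from dideal_x2.smult[OF assms[OF this], of "Poly_Mapping.lookup p m"]
    show "Poly_Mapping.single m (Poly_Mapping.lookup p m) \<in> dideal_x2"
      by (simp add: dconst_mult_single)
  qed
  then show ?thesis using poly_mapping_monomial_expansion[of p] by simp
qed

subsection \<open>Powers of the variables in the ideal\<close>

definition adj_monom :: "nat \<Rightarrow> nat \<Rightarrow> nat \<Rightarrow> 'k::comm_ring_1 dpoly" where
  "adj_monom i p q = Poly_Mapping.single (Poly_Mapping.single i p + Poly_Mapping.single (Suc i) q) 1"

lemma dvar_mult_dderiv_adj_monom:
  assumes p: "p \<ge> 1"
  shows "dvar (Suc i) * dderiv (adj_monom i p q :: 'k::comm_ring_1 dpoly) =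
     dconst (of_nat p) * adj_monom i (p - 1) (q + 2)
     + dconst (of_nat q) * (dvar (Suc (Suc i)) * adj_monom i p q)"
proof -
  define m where "m = Poly_Mapping.single i p + Poly_Mapping.single (Suc i) q"
  have lookup_m: "Poly_Mapping.lookup m j = (if j = i then p else if j = Suc i then q else 0)" for j
    by (auto simp: m_def lookup_add lookup_single when_def)
  let ?f = "\<lambda>j. Poly_Mapping.single (m - unit_exp j + unit_exp (Suc j))
                  ((1::'k) * of_nat (Poly_Mapping.lookup m j))"
  have "dderiv (adj_monom i p q :: 'k dpoly) = (\<Sum>j\<in>Poly_Mapping.keys m. ?f j)"
    unfolding adj_monom_def m_def[symmetric] by (rule dderiv_single)
  also have "\<dots> = (\<Sum>j\<in>{i, Suc i}. ?f j)"
    by (rule sum.mono_neutral_left) (auto simp: in_keys_iff lookup_m split: if_splits)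
  finally have deriv: "dderiv (adj_monom i p q :: 'k dpoly) = ?f i + ?f (Suc i)" by simp
  have exp_i: "unit_exp (Suc i) + (m - unit_exp i + unit_exp (Suc i))
      = Poly_Mapping.single i (p - 1) + Poly_Mapping.single (Suc i) (q + 2)"
    by (rule poly_mapping_eqI)
      (use p in \<open>auto simp: lookup_m lookup_add lookup_minus lookup_single when_def\<close>)
  have "dvar (Suc i) * ?f i
      = Poly_Mapping.single (unit_exp (Suc i) + (m - unit_exp i + unit_exp (Suc i))) (of_nat p)"
    by (simp add: dvar_def mult_single lookup_m)
  then have term_i: "dvar (Suc i) * ?f i = dconst (of_nat p) * adj_monom i (p - 1) (q + 2)"
    by (simp only: exp_i adj_monom_def dconst_mult_single mult_1_right)
  have term_Suc_i:
    "dvar (Suc i) * ?f (Suc i) = dconst (of_nat q) * (dvar (Suc (Suc i)) * adj_monom i p q)"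
  proof (cases "q = 0")
    case True
    then show ?thesis by (simp add: lookup_m dconst_def)
  next
    case False
    have "unit_exp (Suc i) + (m - unit_exp (Suc i) + unit_exp (Suc (Suc i)))
        = unit_exp (Suc (Suc i)) + m"
      by (rule poly_mapping_eqI)
        (use False in \<open>auto simp: lookup_m lookup_add lookup_minus lookup_single when_def\<close>)
    moreover have "dvar (Suc i) * ?f (Suc i) = Poly_Mapping.single
        (unit_exp (Suc i) + (m - unit_exp (Suc i) + unit_exp (Suc (Suc i)))) (of_nat q)"
      by (simp add: dvar_def mult_single lookup_m)
    ultimately show ?thesis
      by (simp only: adj_monom_def m_def[symmetric] dvar_def mult_single dconst_mult_single
          mult_1_right)
  qed
  show ?thesis unfolding deriv distrib_left term_i term_Suc_i ..
qed

lemma adj_monom_trade_in_dideal_x2: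
  assumes p: "p \<ge> 1" and mem: "(adj_monom i p q :: 'k::field_char_0 dpoly) \<in> dideal_x2"
  shows "(adj_monom i (p - 1) (q + 2) :: 'k dpoly) \<in> dideal_x2"
proof -
  have "dvar (Suc i) * dderiv (adj_monom i p q :: 'k dpoly)
      - dconst (of_nat q) * (dvar (Suc (Suc i)) * adj_monom i p q) \<in> dideal_x2"
    by (intro dideal_x2_diff dideal_x2.mult[OF dideal_x2.deriv[OF mem] dvar_in_kplus]
        dideal_x2.smult[OF dideal_x2.mult[OF mem dvar_in_kplus]])
  then have "dconst (of_nat p) * (adj_monom i (p - 1) (q + 2) :: 'k dpoly) \<in> dideal_x2"
    unfolding dvar_mult_dderiv_adj_monom[OF p] by simp
  then have "dconst (1 / of_nat p) * dconst (of_nat p) * (adj_monom i (p - 1) (q + 2) :: 'k dpoly)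
      \<in> dideal_x2"
    unfolding mult.assoc by (rule dideal_x2.smult)
  moreover have "dconst (1 / of_nat p) * dconst (of_nat p) = (1 :: 'k dpoly)"
    using p by (simp only: dconst_def mult_single) simp
  ultimately show ?thesis by simp
qed

lemma adj_monom_shift_in_dideal_x2:
  assumes "(adj_monom i p 0 :: 'k::field_char_0 dpoly) \<in> dideal_x2"
  shows "(adj_monom i 0 (2 * p) :: 'k dpoly) \<in> dideal_x2"
proof -
  have "k \<le> p \<Longrightarrow> (adj_monom i (p - k) (2 * k) :: 'k dpoly) \<in> dideal_x2" for k
  proof (induction k)
    case 0
    then show ?case using assms by simp
  next
    case (Suc k)
    then have "1 \<le> p - k" and "(adj_monom i (p - k) (2 * k) :: 'k dpoly) \<in> dideal_x2"
      by simp_all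
    moreover have "p - k - 1 = p - Suc k" "2 * k + 2 = 2 * Suc k" by simp_all
    ultimately show ?case using adj_monom_trade_in_dideal_x2 by metis
  qed
  from this[of p] show ?thesis by simp
qed

lemma dvar_power_in_dideal_x2:
  "(Poly_Mapping.single (Poly_Mapping.single i (2 ^ Suc i)) 1 :: 'k::field_char_0 dpoly)
     \<in> dideal_x2"
proof (induction i)
  case 0
  have "dvar 0 * dvar 0 = (Poly_Mapping.single (Poly_Mapping.single 0 2) 1 :: 'k dpoly)"
    by (simp add: dvar_def mult_single single_add[symmetric] numeral_2_eq_2)
  then show ?case using dideal_x2.gen[where 'k='k] by simp
next
  case (Suc i)
  then have "(adj_monom i (2 ^ Suc i) 0 :: 'k dpoly) \<in> dideal_x2"
    by (simp add: adj_monom_def)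
  from adj_monom_shift_in_dideal_x2[OF this] show ?case
    by (simp add: adj_monom_def)
qed

lemma monomial_in_dideal_x2_if_large_exponent:
  assumes "2 ^ Suc i \<le> Poly_Mapping.lookup m i"
  shows "(Poly_Mapping.single m 1 :: 'k::field_char_0 dpoly) \<in> dideal_x2"
proof -
  define r where "r = m - Poly_Mapping.single i (2 ^ Suc i)"
  have "m = r + Poly_Mapping.single i (2 ^ Suc i)"
    by (rule poly_mapping_eqI)
      (use assms in \<open>auto simp: r_def lookup_add lookup_minus lookup_single when_def\<close>)
  then have split: "(Poly_Mapping.single m 1 :: 'k dpoly)
      = Poly_Mapping.single r 1 * Poly_Mapping.single (Poly_Mapping.single i (2 ^ Suc i)) 1"
    by (simp add: mult_single)
  show ?thesis
  proof (cases "r = 0")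
    case True
    then show ?thesis using split dvar_power_in_dideal_x2 by simp
  next
    case False
    then show ?thesis
      unfolding split by (rule dideal_x2.mult[OF dvar_power_in_dideal_x2 single_in_kplus])
  qed
qed

subsection \<open>Degree and weight of monomials\<close>

definition wdeg :: "(nat \<Rightarrow> nat) \<Rightarrow> (nat \<Rightarrow>\<^sub>0 nat) \<Rightarrow> nat" where
  "wdeg f m = (\<Sum>j\<in>Poly_Mapping.keys m. f j * Poly_Mapping.lookup m j)"

abbreviation total_degree :: "(nat \<Rightarrow>\<^sub>0 nat) \<Rightarrow> nat" where
  "total_degree \<equiv> wdeg (\<lambda>_. 1)"

abbreviation weight :: "(nat \<Rightarrow>\<^sub>0 nat) \<Rightarrow> nat" where
  "weight \<equiv> wdeg id"

lemma wdeg_eq_sum_superset: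
  "finite S \<Longrightarrow> Poly_Mapping.keys m \<subseteq> S \<Longrightarrow> wdeg f m = (\<Sum>j\<in>S. f j * Poly_Mapping.lookup m j)"
  unfolding wdeg_def by (rule sum.mono_neutral_left) (auto simp: in_keys_iff)

lemma wdeg_zero [simp]: "wdeg f 0 = 0"
  by (simp add: wdeg_def)

lemma wdeg_single [simp]: "wdeg f (Poly_Mapping.single j n) = f j * n"
  by (cases "n = 0") (simp_all add: wdeg_def)

lemma wdeg_add: "wdeg f (a + b) = wdeg f a + wdeg f b"
  unfolding wdeg_def by (rule setsum_keys_plus_distrib) (simp_all add: distrib_left)

lemma total_degree_pos: "m \<noteq> 0 \<Longrightarrow> 1 \<le> total_degree m"
proof -
  assume "m \<noteq> 0"
  then obtain j where j: "j \<in> Poly_Mapping.keys m" by (metis all_not_in_conv keys_eq_empty)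
  have "Poly_Mapping.lookup m j \<le> total_degree m"
    unfolding wdeg_def using j by (simp add: member_le_sum)
  with j show ?thesis by (simp add: in_keys_iff)
qed

lemma wdeg_shift_exp:
  assumes "i \<in> Poly_Mapping.keys m"
  shows "wdeg f (m - unit_exp i + unit_exp (Suc i)) + f i = wdeg f m + f (Suc i)"
proof -
  have "m = (m - unit_exp i) + unit_exp i"
    by (rule poly_mapping_eqI)
      (use assms in \<open>auto simp: lookup_add lookup_minus lookup_single when_def in_keys_iff\<close>)
  then have "wdeg f m = wdeg f (m - unit_exp i) + f i"
    by (metis wdeg_add wdeg_single mult_1_right)
  then show ?thesis by (simp add: wdeg_add)
qed

definition deg_weight_bounded :: "nat \<Rightarrow> nat \<Rightarrow> 'k::zero dpoly \<Rightarrow> bool" where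
  "deg_weight_bounded d w p \<longleftrightarrow>
     (\<forall>m\<in>Poly_Mapping.keys p. d \<le> total_degree m \<and> weight m \<le> w)"

lemma deg_weight_boundedI:
  "(\<And>m. m \<in> Poly_Mapping.keys p \<Longrightarrow> d \<le> total_degree m \<and> weight m \<le> w)
    \<Longrightarrow> deg_weight_bounded d w p"
  unfolding deg_weight_bounded_def by blast

lemma deg_weight_boundedD:
  "deg_weight_bounded d w p \<Longrightarrow> m \<in> Poly_Mapping.keys p \<Longrightarrow> d \<le> total_degree m \<and> weight m \<le> w"
  unfolding deg_weight_bounded_def by blast

lemma deg_weight_bounded_zero [simp]: "deg_weight_bounded d w 0"
  by (simp add: deg_weight_bounded_def)

lemma deg_weight_bounded_mono:
  "deg_weight_bounded d w p \<Longrightarrow> d' \<le> d \<Longrightarrow> w \<le> w' \<Longrightarrow> deg_weight_bounded d' w' p"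
  by (rule deg_weight_boundedI) (drule (1) deg_weight_boundedD, linarith)

lemma deg_weight_bounded_sum:
  fixes f :: "'a \<Rightarrow> 'k::comm_monoid_add dpoly"
  assumes "\<And>x. x \<in> S \<Longrightarrow> deg_weight_bounded d w (f x)"
  shows "deg_weight_bounded d w (sum f S)"
proof (rule deg_weight_boundedI)
  fix m assume "m \<in> Poly_Mapping.keys (sum f S)"
  then obtain x where "x \<in> S" "m \<in> Poly_Mapping.keys (f x)" using keys_sum[of f S] by blast
  then show "d \<le> total_degree m \<and> weight m \<le> w" using assms deg_weight_boundedD by blast
qed

lemma deg_weight_bounded_mult:
  fixes a b :: "'k::comm_ring_1 dpoly"
  assumes a: "deg_weight_bounded d1 w1 a" and b: "deg_weight_bounded d2 w2 b"
  shows "deg_weight_bounded (d1 + d2) (w1 + w2) (a * b)"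
proof (rule deg_weight_boundedI)
  fix m assume "m \<in> Poly_Mapping.keys (a * b)"
  then obtain x y where "m = x + y" "x \<in> Poly_Mapping.keys a" "y \<in> Poly_Mapping.keys b"
    using keys_mult[of a b] by blast
  with deg_weight_boundedD[OF a] deg_weight_boundedD[OF b]
  show "d1 + d2 \<le> total_degree m \<and> weight m \<le> w1 + w2"
    by (fastforce simp: wdeg_add)
qed

lemma deg_weight_bounded_of_nat: "deg_weight_bounded 0 0 (of_nat c :: 'k::comm_ring_1 dpoly)"
  by (rule deg_weight_boundedI) (simp add: in_keys_iff lookup_of_nat when_def split: if_splits)

lemma deg_weight_bounded_dderiv:
  fixes p :: "'k::comm_ring_1 dpoly"
  assumes p: "deg_weight_bounded d w p"
  shows "deg_weight_bounded d (Suc w) (dderiv p)"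
  unfolding dderiv_def
proof (intro deg_weight_bounded_sum)
  fix m i v
  assume m: "m \<in> Poly_Mapping.keys p" and i: "i \<in> Poly_Mapping.keys m"
  have "total_degree (m - unit_exp i + unit_exp (Suc i)) = total_degree m"
    "weight (m - unit_exp i + unit_exp (Suc i)) = Suc (weight m)"
    using wdeg_shift_exp[OF i, of "\<lambda>_. 1"] wdeg_shift_exp[OF i, of id] by simp_all
  with deg_weight_boundedD[OF p m]
  show "deg_weight_bounded d (Suc w) (Poly_Mapping.single (m - unit_exp i + unit_exp (Suc i)) v)"
    by (simp add: deg_weight_bounded_def)
qed

lemma deg_weight_bounded_dderiv_funpow:
  "deg_weight_bounded d w (p :: 'k::comm_ring_1 dpoly) \<Longrightarrow>
    deg_weight_bounded d (w + l) ((dderiv ^^ l) p)"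
  by (induction l) (simp_all add: deg_weight_bounded_dderiv)

lemma deg_weight_bounded_op_mult:
  fixes P Q :: "nat \<Rightarrow> 'k::comm_ring_1 dpoly"
  assumes P: "\<And>i. deg_weight_bounded 1 W (P i)" and order: "\<And>i. P i \<noteq> 0 \<Longrightarrow> i \<le> N"
    and Q: "\<And>j. deg_weight_bounded d w (Q j)"
  shows "deg_weight_bounded (Suc d) (W + N + w) (op_mult P Q k)"
  unfolding op_mult_def
proof (intro deg_weight_bounded_sum)
  fix i j l assume i: "i \<in> {i. P i \<noteq> 0}" and l: "l \<in> {..i}"
  have "deg_weight_bounded (0 + 1 + d) (0 + W + (w + l))
      (of_nat (i choose l) * P i * (dderiv ^^ l) (Q j))"
    by (intro deg_weight_bounded_mult deg_weight_bounded_of_nat P deg_weight_bounded_dderiv_funpow Q)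
  moreover have "l \<le> N" using i l order by fastforce
  ultimately show "deg_weight_bounded (Suc d) (W + N + w)
      (if i + j - l = k then of_nat (i choose l) * P i * (dderiv ^^ l) (Q j) else 0)"
    by (auto elim: deg_weight_bounded_mono)
qed

lemma deg_weight_bounded_op_pow:
  fixes P :: "nat \<Rightarrow> 'k::comm_ring_1 dpoly"
  assumes P: "\<And>i. deg_weight_bounded 1 W (P i)" and order: "\<And>i. P i \<noteq> 0 \<Longrightarrow> i \<le> N"
  shows "deg_weight_bounded (Suc n) (Suc n * (W + N)) (op_pow P n k)"
proof (induction n arbitrary: k)
  case 0
  show ?case using deg_weight_bounded_mono[OF P[of k]] by simp
next
  case (Suc n)
  from deg_weight_bounded_op_mult[OF P order Suc.IH] show ?case by (simp add: add.assoc)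
qed

lemma D2_op_deg_weight_bounded:
  assumes "is_D2_op P"
  obtains W N where "\<And>i. deg_weight_bounded 1 W (P i)" and "\<And>i. P i \<noteq> 0 \<Longrightarrow> i \<le> N"
proof -
  have fin: "finite {i. P i \<noteq> 0}" and kplus: "\<And>i. P i \<in> kplus"
    using assms by (auto simp: is_D2_op_def)
  from fin obtain N where N: "\<And>i. P i \<noteq> 0 \<Longrightarrow> i \<le> N"
    unfolding finite_nat_set_iff_bounded_le by blast
  define T where "T = (\<Union>i\<in>{i. P i \<noteq> 0}. Poly_Mapping.keys (P i))"
  from fin have "finite (weight ` T)" by (simp add: T_def)
  then obtain W where W: "\<And>m. m \<in> T \<Longrightarrow> weight m \<le> W"
    unfolding finite_nat_set_iff_bounded_le by blast
  have "deg_weight_bounded 1 W (P i)" for i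
  proof (rule deg_weight_boundedI)
    fix m assume m: "m \<in> Poly_Mapping.keys (P i)"
    then have "m \<noteq> 0" using kplus[of i] by (auto simp: kplus_def in_keys_iff)
    moreover have "P i \<noteq> 0" using m by auto
    with m have "m \<in> T" unfolding T_def by blast
    ultimately show "1 \<le> total_degree m \<and> weight m \<le> W"
      using W total_degree_pos by blast
  qed
  from this N show ?thesis by (rule that)
qed

subsection \<open>Pigeonhole\<close>

lemma total_degree_le_if_small_exponents:
  assumes small: "\<And>j. Poly_Mapping.lookup m j < 2 ^ Suc j"
  shows "Suc M * total_degree m \<le> Suc M * (Suc M * 2 ^ Suc M) + weight m"
proof -
  define S where "S = {..M} \<union> Poly_Mapping.keys m"
  have fin: "finite S" and keys: "Poly_Mapping.keys m \<subseteq> S" by (auto simp: S_def)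
  have "Suc M * total_degree m = (\<Sum>j\<in>S. Suc M * Poly_Mapping.lookup m j)"
    by (simp add: wdeg_eq_sum_superset[OF fin keys] sum_distrib_left)
  also have "\<dots> \<le> (\<Sum>j\<in>S. (if j \<le> M then Suc M * 2 ^ Suc M else 0) + j * Poly_Mapping.lookup m j)"
  proof (rule sum_mono)
    fix j
    show "Suc M * Poly_Mapping.lookup m j
        \<le> (if j \<le> M then Suc M * 2 ^ Suc M else 0) + j * Poly_Mapping.lookup m j"
    proof (cases "j \<le> M")
      case True
      then have "(2::nat) ^ Suc j \<le> 2 ^ Suc M" by (intro power_increasing) simp_all
      then have "Poly_Mapping.lookup m j \<le> 2 ^ Suc M" using small[of j] by linarith
      then have "Suc M * Poly_Mapping.lookup m j \<le> Suc M * 2 ^ Suc M" by (rule mult_le_mono2)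
      then show ?thesis by (simp only: if_P[OF True] trans_le_add1)
    next
      case False
      then have "Suc M * Poly_Mapping.lookup m j \<le> j * Poly_Mapping.lookup m j"
        by (intro mult_le_mono1) simp
      with False show ?thesis by simp
    qed
  qed
  also have "\<dots> = (\<Sum>j\<in>{..M}. Suc M * 2 ^ Suc M) + weight m"
  proof -
    have "S \<inter> {j. j \<le> M} = {..M}" by (auto simp: S_def)
    then show ?thesis
      unfolding sum.distrib sum.If_cases[OF fin] wdeg_eq_sum_superset[OF fin keys] by simp
  qed
  finally show ?thesis by simp
qed

lemma exists_large_exponent:
  assumes degree: "(2 * C + 1) ^ 2 * 2 ^ (2 * C + 1) < total_degree m"
    and weight: "weight m \<le> C * total_degree m"
  shows "\<exists>i. 2 ^ Suc i \<le> Poly_Mapping.lookup m i"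
proof (rule ccontr)
  assume "\<not> ?thesis"
  then have "Suc (2 * C) * total_degree m
      \<le> Suc (2 * C) * (Suc (2 * C) * 2 ^ Suc (2 * C)) + weight m"
    by (intro total_degree_le_if_small_exponents) (simp add: not_le)
  moreover have "Suc (2 * C) * total_degree m = C * total_degree m + Suc C * total_degree m"
    and "total_degree m \<le> Suc C * total_degree m"
    by simp_all
  moreover have "(2 * C + 1) ^ 2 * 2 ^ (2 * C + 1) = Suc (2 * C) * (Suc (2 * C) * 2 ^ Suc (2 * C))"
    by (simp only: power2_eq_square Suc_eq_plus1 mult.assoc)
  ultimately show False
    using degree weight by linarith
qed

lemma dideal_x2_if_deg_weight_bounded:
  fixes p :: "'k::field_char_0 dpoly"
  assumes bounded: "deg_weight_bounded d (d * C) p"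
    and large: "(2 * C + 1) ^ 2 * 2 ^ (2 * C + 1) < d"
  shows "p \<in> dideal_x2"
proof (rule dideal_x2_if_monomials)
  fix m assume "m \<in> Poly_Mapping.keys p"
  with bounded have deg: "d \<le> total_degree m" and "weight m \<le> d * C"
    by (auto dest: deg_weight_boundedD)
  then have "weight m \<le> C * total_degree m"
    by (metis le_trans mult.commute mult_le_mono1)
  with deg large obtain i where "2 ^ Suc i \<le> Poly_Mapping.lookup m i"
    using exists_large_exponent[of C m] by auto
  then show "(Poly_Mapping.single m 1 :: 'k dpoly) \<in> dideal_x2"
    by (rule monomial_in_dideal_x2_if_large_exponent)
qed

theorem mainTheorem7:
  fixes P :: "nat \<Rightarrow> 'k::field_char_0 dpoly"
  assumes "is_D2_op P"
  shows "D2_op_nilpotent P"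
proof -
  obtain W N where coeffs: "\<And>i. deg_weight_bounded 1 W (P i)"
    and order: "\<And>i. P i \<noteq> 0 \<Longrightarrow> i \<le> N"
    using D2_op_deg_weight_bounded[OF assms] by blast
  define C where "C = W + N"
  define n where "n = (2 * C + 1) ^ 2 * 2 ^ (2 * C + 1)"
  have "op_pow P n k \<in> dideal_x2" for k
  proof (rule dideal_x2_if_deg_weight_bounded)
    show "deg_weight_bounded (Suc n) (Suc n * C) (op_pow P n k)"
      unfolding C_def by (rule deg_weight_bounded_op_pow[OF coeffs order])
    show "(2 * C + 1) ^ 2 * 2 ^ (2 * C + 1) < Suc n" by (simp add: n_def)
  qed
  then show ?thesis unfolding D2_op_nilpotent_def by blast
qed

end
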